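(* Let $n\ge 1$ and let $\|\cdot\|_L$ be one of the vectorized norms $L_1,L_2,L_\infty$ on $\mathbb{R}^{n\times n}$. Let $M\subset\mathbb{R}^{n\times n}$ be a measurable set of finite positive Lebesgue measure containing an open ball $B(a,c)$ whose radius $c$ is large enough that $B(a,c)$ contains a singular matrix of rank $n-1$, and let $S_M$ be the set of singular matrices in $M$. Let $F:\mathbb{R}^{n\times n}\to\mathbb{R}^{n\times n}$ be any polynomial Lipschitz continuous function. Then for every $K\ge n^2$ and every real $K'\ge 0$, $$\mathbb{E}_{x\sim M}\left[\frac{\|\mathrm{Inv}(x)-F(x)\|_L^K}{\|x\|_L^{K'}}\right]=\frac{1}{m(M)}\int_{M\setminus S_M}\frac{\|\mathrm{Inv}(x)-F(x)\|_L^K}{\|x\|_L^{K'}}\,dm(x)=+\infty.$$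
   Context: $\mathrm{Inv}(x)=x^{-1}$ denotes matrix inversion, defined on invertible matrices; $S_M$ has Lebesgue measure zero. For $A=(a_{ij})\in\mathbb{R}^{n\times n}$ the norms are vectorized: $\|A\|_{L_1}=\sum_{i,j}|a_{ij}|$, $\|A\|_{L_2}=(\sum_{i,j}|a_{ij}|^2)^{1/2}$, $\|A\|_{L_\infty}=\max_{i,j}|a_{ij}|$; $\mathbb{R}^{n\times n}$ is identified with $\mathbb{R}^{n^2}$ with Lebesgue measure $m$. A function $f:\mathbb{R}^{n_1}\to\mathbb{R}^{n_2}$ is called polynomial Lipschitz continuous with respect to norms $\|\cdot\|_{L^+}$, $\|\cdot\|_{L^*}$ (chosen among $L_1,L_2,L_\infty$) if there exist a nonnegative integer $N$ and real polynomials $f_0,\dots,f_N$ in two variables such that for all $x,y$, $\|f(x)-f(y)\|_{L^*}\le \sum_{i=0}^{N} f_i(\|x\|_{L^+},\|y\|_{L^+})\|x-y\|_{L^+}^{i}$. *)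

theory Defs
  imports "HOL-Analysis.Analysis"
begin

datatype normL = L1 | L2 | Linf

definition mnorm :: "normL \<Rightarrow> real^'n^'n \<Rightarrow> real" where
  "mnorm L A = (case L of
      L1 \<Rightarrow> (\<Sum>i\<in>UNIV. \<Sum>j\<in>UNIV. \<bar>A $ i $ j\<bar>)
    | L2 \<Rightarrow> sqrt (\<Sum>i\<in>UNIV. \<Sum>j\<in>UNIV. \<bar>A $ i $ j\<bar> ^ 2)
    | Linf \<Rightarrow> Max {\<bar>A $ i $ j\<bar> | i j. True})"

definition poly2 :: "nat \<Rightarrow> (nat \<Rightarrow> nat \<Rightarrow> real) \<Rightarrow> real \<Rightarrow> real \<Rightarrow> real" where
  "poly2 D c s t = (\<Sum>j\<le>D. \<Sum>k\<le>D. c j k * s ^ j * t ^ k)"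

definition poly_lipschitz ::
  "normL \<Rightarrow> normL \<Rightarrow> (real^'n^'n \<Rightarrow> real^'n^'n) \<Rightarrow> bool" where
  "poly_lipschitz Lp Ls F \<longleftrightarrow>
     (\<exists>(N::nat) (D::nat) (c::nat \<Rightarrow> nat \<Rightarrow> nat \<Rightarrow> real).
        \<forall>x y. mnorm Ls (F x - F y)
          \<le> (\<Sum>i\<le>N. poly2 D (c i) (mnorm Lp x) (mnorm Lp y) * mnorm Lp (x - y) ^ i))"

end

theory Submission
  imports Defs
begin

text \<open>Let \<open>x0\<close> be a singular matrix in the ball inside \<open>M\<close> and \<open>v\<close> a kernel vector of \<open>x0\<close>.
  For invertible \<open>y\<close> we have \<open>v = y^-1 (y - x0) v\<close>, hence \<open>|y^-1| \<ge> c / |y - x0|\<close>.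
  A polynomially Lipschitz \<open>F\<close> is bounded near \<open>x0\<close>, and so is \<open>|y|\<close>; since \<open>K \<ge> n^2\<close>, the
  integrand is therefore at least \<open>C / |y - x0|^(n^2)\<close> near \<open>x0\<close>. In dimension \<open>n^2\<close> this
  singularity is not integrable: every dyadic shell around \<open>x0\<close> contributes the same positive
  amount. Removing the singular matrices does not help, as they form a null set.\<close>

lemma abs_nth_nth_le_norm: "\<bar>A $ i $ j\<bar> \<le> norm (A :: real^'n^'m)"
  using component_le_norm_cart[of "A $ i" j] Finite_Cartesian_Product.norm_nth_le[of A i] by linarith

lemma norm_le_sum_abs_nth_nth: "norm (A :: real^'n^'m) \<le> (\<Sum>i\<in>UNIV. \<Sum>j\<in>UNIV. \<bar>A $ i $ j\<bar>)"
proof -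
  have "norm A = L2_set (\<lambda>i. norm (A $ i)) UNIV"
    by (rule norm_vec_def)
  also have "\<dots> \<le> (\<Sum>i\<in>UNIV. norm (A $ i))"
    by (rule L2_set_le_sum) simp
  also have "\<dots> \<le> (\<Sum>i\<in>UNIV. \<Sum>j\<in>UNIV. \<bar>A $ i $ j\<bar>)"
    by (intro sum_mono norm_le_l1_cart)
  finally show ?thesis .
qed

lemma mnorm_L2_eq_norm: "mnorm L2 (A :: real^'n^'n) = norm A"
  by (simp add: mnorm_def norm_vec_def L2_set_def sum_nonneg)

lemma finite_abs_entries: "finite {\<bar>(A :: real^'n^'m) $ i $ j\<bar> | i j. True}"
proof -
  have "{\<bar>A $ i $ j\<bar> | i j. True} = (\<lambda>(i, j). \<bar>A $ i $ j\<bar>) ` UNIV"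
    by auto
  then show ?thesis
    by simp
qed

lemma abs_nth_nth_le_mnorm_Linf: "\<bar>A $ i $ j\<bar> \<le> mnorm Linf (A :: real^'n^'n)"
  using finite_abs_entries by (auto simp: mnorm_def intro!: Max_ge)

lemma mnorm_Linf_attained: "\<exists>i j. mnorm Linf (A :: real^'n^'n) = \<bar>A $ i $ j\<bar>"
proof -
  have "Max {\<bar>A $ i $ j\<bar> | i j. True} \<in> {\<bar>A $ i $ j\<bar> | i j. True}"
    using finite_abs_entries by (rule Max_in) auto
  then show ?thesis
    by (auto simp: mnorm_def)
qed

lemma one_le_card_sq: "1 \<le> real CARD('n::finite) ^ 2"
  by (simp add: Suc_le_eq)

lemma mnorm_le_norm: "mnorm L A \<le> real CARD('n) ^ 2 * norm (A :: real^'n^'n)"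
proof (cases L)
  case L1
  have "(\<Sum>i\<in>UNIV. \<Sum>j\<in>UNIV. \<bar>A $ i $ j\<bar>)
      \<le> (\<Sum>i\<in>(UNIV::'n set). \<Sum>j\<in>(UNIV::'n set). norm A)"
    by (intro sum_mono abs_nth_nth_le_norm)
  with L1 show ?thesis
    by (simp add: mnorm_def power2_eq_square mult.assoc)
next
  case L2
  then show ?thesis
    using one_le_card_sq[where 'n='n] by (simp add: mnorm_L2_eq_norm mult_le_cancel_right1)
next
  case Linf
  then obtain i j where "mnorm L A = \<bar>A $ i $ j\<bar>"
    using mnorm_Linf_attained by blast
  also have "\<dots> \<le> norm A"
    by (rule abs_nth_nth_le_norm)
  also have "\<dots> \<le> real CARD('n) ^ 2 * norm A"
    using one_le_card_sq[where 'n='n] by (simp add: mult_le_cancel_right1)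
  finally show ?thesis .
qed

lemma norm_le_mnorm: "norm (A :: real^'n^'n) \<le> real CARD('n) ^ 2 * mnorm L A"
proof (cases L)
  case L1
  then show ?thesis
    using norm_le_sum_abs_nth_nth[of A] one_le_card_sq[where 'n='n]
      mult_right_mono[of 1 "real CARD('n) ^ 2" "\<Sum>i\<in>UNIV. \<Sum>j\<in>UNIV. \<bar>A $ i $ j\<bar>"]
    by (simp add: mnorm_def sum_nonneg)
next
  case L2
  then show ?thesis
    using one_le_card_sq[where 'n='n] by (simp add: mnorm_L2_eq_norm mult_le_cancel_right1)
next
  case Linf
  have "norm A \<le> (\<Sum>i\<in>UNIV. \<Sum>j\<in>UNIV. \<bar>A $ i $ j\<bar>)"
    by (rule norm_le_sum_abs_nth_nth)
  also have "\<dots> \<le> (\<Sum>i\<in>(UNIV::'n set). \<Sum>j\<in>(UNIV::'n set). mnorm Linf A)"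
    by (intro sum_mono abs_nth_nth_le_mnorm_Linf)
  finally show ?thesis
    using Linf by (simp add: power2_eq_square mult.assoc)
qed

lemma mnorm_nonneg: "0 \<le> mnorm L (A :: real^'n^'n)"
proof -
  have "0 \<le> real CARD('n) ^ 2 * mnorm L A"
    using norm_le_mnorm[of A L] norm_ge_zero[of A] by linarith
  then show ?thesis
    by (simp add: zero_le_mult_iff)
qed

lemma mnorm_pos: "(A :: real^'n^'n) \<noteq> 0 \<Longrightarrow> 0 < mnorm L A"
proof -
  assume "A \<noteq> 0"
  then have "0 < norm A"
    by simp
  also have "\<dots> \<le> real CARD('n) ^ 2 * mnorm L A"
    by (rule norm_le_mnorm)
  finally show ?thesis
    by (simp add: zero_less_mult_iff)
qed

lemma mnorm_triangle: "mnorm L ((A :: real^'n^'n) + B) \<le> mnorm L A + mnorm L B"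
proof (cases L)
  case L1
  have "(\<Sum>i\<in>UNIV. \<Sum>j\<in>UNIV. \<bar>(A + B) $ i $ j\<bar>)
      \<le> (\<Sum>i\<in>UNIV. \<Sum>j\<in>UNIV. \<bar>A $ i $ j\<bar> + \<bar>B $ i $ j\<bar>)"
    by (intro sum_mono) (simp add: abs_triangle_ineq)
  with L1 show ?thesis
    by (simp add: mnorm_def sum.distrib)
next
  case L2
  then show ?thesis
    by (simp add: mnorm_L2_eq_norm norm_triangle_ineq)
next
  case Linf
  then obtain i j where "mnorm L (A + B) = \<bar>(A + B) $ i $ j\<bar>"
    using mnorm_Linf_attained by blast
  then show ?thesis
    using Linf abs_nth_nth_le_mnorm_Linf[of A i j] abs_nth_nth_le_mnorm_Linf[of B i j]
      abs_triangle_ineq[of "A $ i $ j" "B $ i $ j"]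
    by simp
qed

lemma norm_matrix_vector_mult_le: "norm ((A :: real^'n^'n) *v x) \<le> mnorm L1 A * norm x"
proof -
  have "norm (A *v x) \<le> onorm ((*v) A) * norm x"
    by (rule onorm) simp
  also have "\<dots> \<le> mnorm L1 A * norm x"
    using onorm_le_matrix_component_sum[of A] by (simp add: mnorm_def mult_right_mono)
  finally show ?thesis .
qed

text \<open>A singular matrix has a row that is a linear combination of the other rows. Storing the
  coefficients in that row, off the diagonal, exhibits the matrix as an image of the hyperplane
  \<open>A $ k $ k = 0\<close> under the polynomial map \<open>row_combination k\<close>.\<close>

definition row_combination :: "'n::finite \<Rightarrow> real^'n^'n \<Rightarrow> real^'n^'n" where
  "row_combination k A = A - axis k (A $ k) + (\<Sum>j\<in>UNIV - {k}. A $ k $ j *\<^sub>R axis k (A $ j))"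

lemma row_combination_nth:
  "row_combination k A $ i = (if i = k then \<Sum>j\<in>UNIV - {k}. A $ k $ j *\<^sub>R A $ j else A $ i)"
  unfolding row_combination_def by (auto simp: axis_def vec_eq_iff)

lemma polynomial_function_row_combination:
  fixes k :: "'n::finite"
  shows "polynomial_function (row_combination k)"
proof -
  have entry: "bounded_linear (\<lambda>A::real^'n^'n. A $ i $ j)" for i j :: 'n
    using bounded_linear_compose[OF bounded_linear_vec_nth[of j] bounded_linear_vec_nth[of i]]
    by (simp add: o_def)
  have row: "bounded_linear (\<lambda>A::real^'n^'n. axis k (A $ j))" for j :: 'n
    by (rule linear_conv_bounded_linear[THEN iffD1]) (auto simp: linear_iff axis_def vec_eq_iff)
  show ?thesis
    unfolding row_combination_def[abs_def]
    by (intro polynomial_function_add polynomial_function_diff polynomial_function_sum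
        polynomial_function_mult polynomial_function_bounded_linear entry row) auto
qed

lemma singular_in_row_combination_image:
  fixes x :: "real^'n^'n"
  assumes "\<not> invertible x"
  obtains k A where "A $ k $ k = 0" "x = row_combination k A"
proof -
  have "rank (transpose x) \<noteq> CARD('n)"
    using assms by (simp add: invertible_det_nz det_eq_0_rank rank_transpose)
  then obtain c where "c \<noteq> 0" "transpose x *v c = 0"
    using matrix_nonfull_linear_equations_eq by blast
  then obtain k where "c $ k \<noteq> 0"
    by (metis vec_eq_iff zero_index)
  have "(\<Sum>i\<in>UNIV. c $ i *\<^sub>R x $ i) = 0"
    using \<open>transpose x *v c = 0\<close>
    by (simp add: vec_eq_iff matrix_vector_mult_def transpose_def mult.commute)
  moreover have "(\<Sum>i\<in>UNIV. c $ i *\<^sub>R x $ i) = c $ k *\<^sub>R x $ k + (\<Sum>i\<in>UNIV - {k}. c $ i *\<^sub>R x $ i)"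
    by (simp add: sum.remove)
  ultimately have ck_row_k: "c $ k *\<^sub>R x $ k = - (\<Sum>i\<in>UNIV - {k}. c $ i *\<^sub>R x $ i)"
    by (simp add: eq_neg_iff_add_eq_0)
  have "x $ k = (1 / c $ k) *\<^sub>R (c $ k *\<^sub>R x $ k)"
    using \<open>c $ k \<noteq> 0\<close> by simp
  also have "\<dots> = (\<Sum>i\<in>UNIV - {k}. (- c $ i / c $ k) *\<^sub>R x $ i)"
    unfolding ck_row_k scaleR_minus_right scaleR_sum_right by (simp add: sum_negf[symmetric])
  finally have row_k: "x $ k = (\<Sum>i\<in>UNIV - {k}. (- c $ i / c $ k) *\<^sub>R x $ i)" .
  define A where "A = (\<chi> i. if i = k then (\<chi> j. if j = k then 0 else - c $ j / c $ k) else x $ i)"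
  have "(\<Sum>j\<in>UNIV - {k}. A $ k $ j *\<^sub>R A $ j) = x $ k"
    unfolding row_k by (rule sum.cong) (auto simp: A_def)
  then have "x = row_combination k A"
    by (auto simp: vec_eq_iff[of x] row_combination_nth A_def)
  moreover have "A $ k $ k = 0"
    by (simp add: A_def)
  ultimately show ?thesis
    using that by blast
qed

lemma negligible_singular_matrices: "negligible {x :: real^'n^'n. \<not> invertible x}"
proof -
  have "negligible {A :: real^'n^'n. axis k (axis k 1) \<bullet> A = 0}" for k
    by (rule negligible_hyperplane) simp
  then have "negligible (row_combination k ` {A :: real^'n^'n. A $ k $ k = 0})" for k
    by (intro negligible_differentiable_image_negligible differentiable_on_polynomial_function
        polynomial_function_row_combination) (simp_all add: inner_axis')
  then have "negligible (\<Union>k. row_combination k ` {A :: real^'n^'n. A $ k $ k = 0})"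
    by (intro negligible_Union) auto
  moreover have "{x :: real^'n^'n. \<not> invertible x} \<subseteq> (\<Union>k. row_combination k ` {A. A $ k $ k = 0})"
    by (blast elim: singular_in_row_combination_image)
  ultimately show ?thesis
    by (rule negligible_subset)
qed

lemma matrix_inv_mult_left: "invertible A \<Longrightarrow> matrix_inv A ** A = mat 1"
  unfolding invertible_def matrix_inv_def by (rule someI2_ex) auto

lemma one_le_mnorm_L1_matrix_inv_mult_diff:
  fixes x y :: "real^'n^'n"
  assumes "\<not> invertible x" and "invertible y"
  shows "1 \<le> mnorm L1 (matrix_inv y) * mnorm L1 (y - x)"
proof -
  have "rank x \<noteq> CARD('n)"
    using assms(1) by (simp add: invertible_det_nz det_eq_0_rank)
  then obtain v :: "real^'n" where "v \<noteq> 0" "x *v v = 0"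
    using matrix_nonfull_linear_equations_eq by blast
  then have "v = matrix_inv y *v ((y - x) *v v)"
    using matrix_inv_mult_left[OF assms(2)]
    by (simp add: matrix_vector_mul_assoc matrix_vector_mult_diff_rdistrib)
  then have "norm v \<le> mnorm L1 (matrix_inv y) * norm ((y - x) *v v)"
    by (metis norm_matrix_vector_mult_le)
  also have "\<dots> \<le> mnorm L1 (matrix_inv y) * (mnorm L1 (y - x) * norm v)"
    by (intro mult_left_mono norm_matrix_vector_mult_le mnorm_nonneg)
  finally show ?thesis
    using \<open>v \<noteq> 0\<close> by (simp add: mult.assoc[symmetric])
qed

lemma ball_subset_mnorm_ball:
  fixes a x0 :: "real^'n^'n"
  assumes "mnorm L (x0 - a) < c"
  obtains r where "0 < r" "ball x0 r \<subseteq> {x. mnorm L (x - a) < c}"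
proof
  let ?r = "(c - mnorm L (x0 - a)) / real CARD('n) ^ 2"
  show "0 < ?r"
    using assms by simp
  show "ball x0 ?r \<subseteq> {x. mnorm L (x - a) < c}"
  proof
    fix x assume "x \<in> ball x0 ?r"
    then have "real CARD('n) ^ 2 * norm (x - x0) < c - mnorm L (x0 - a)"
      by (simp add: dist_norm norm_minus_commute field_simps)
    moreover have "mnorm L (x - a) \<le> mnorm L (x - x0) + mnorm L (x0 - a)"
      using mnorm_triangle[of L "x - x0" "x0 - a"] by simp
    ultimately show "x \<in> {x. mnorm L (x - a) < c}"
      using mnorm_le_norm[of L "x - x0"] by simp
  qed
qed

lemma poly_lipschitz_bounded_image:
  fixes F :: "real^'n^'n \<Rightarrow> real^'n^'n"
  assumes "poly_lipschitz Lp Ls F" and "bounded S"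
  shows "bounded (F ` S)"
proof -
  obtain N D c where lip: "\<And>x y. mnorm Ls (F x - F y)
      \<le> (\<Sum>i\<le>N. poly2 D (c i) (mnorm Lp x) (mnorm Lp y) * mnorm Lp (x - y) ^ i)"
    using assms(1) unfolding poly_lipschitz_def by blast
  obtain R where R: "\<And>x. x \<in> S \<Longrightarrow> norm x \<le> R"
    using assms(2) bounded_iff by blast
  define \<kappa> where "\<kappa> = real CARD('n) ^ 2"
  define P where "P s = (\<Sum>i\<le>N. poly2 D (c i) s (mnorm Lp (0 :: real^'n^'n)) * s ^ i)" for s
  have "bounded (P ` {0..\<kappa> * R})"
    unfolding P_def poly2_def
    by (intro compact_imp_bounded compact_continuous_image continuous_intros) auto
  then obtain B where B: "\<forall>y \<in> P ` {0..\<kappa> * R}. \<bar>y\<bar> \<le> B"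
    unfolding bounded_iff real_norm_def by blast
  have "norm (F x) \<le> norm (F 0) + \<kappa> * B" if "x \<in> S" for x
  proof -
    have "mnorm Lp x \<le> \<kappa> * norm x"
      unfolding \<kappa>_def by (rule mnorm_le_norm)
    also have "\<dots> \<le> \<kappa> * R"
      using R[OF that] by (simp add: \<kappa>_def mult_left_mono)
    finally have "P (mnorm Lp x) \<le> B"
      using B mnorm_nonneg[of Lp x] by (auto simp: abs_le_iff)
    then have "mnorm Ls (F x - F 0) \<le> B"
      using lip[of x 0] unfolding P_def by simp
    then have "\<kappa> * mnorm Ls (F x - F 0) \<le> \<kappa> * B"
      by (simp add: \<kappa>_def mult_left_mono)
    then have "norm (F x - F 0) \<le> \<kappa> * B"
      using norm_le_mnorm[of "F x - F 0" Ls] unfolding \<kappa>_def by linarith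
    then show ?thesis
      using norm_triangle_sub[of "F x" "F 0"] by simp
  qed
  then show ?thesis
    unfolding bounded_iff by blast
qed

lemma nn_integral_shell_inverse_dist_power_ge:
  fixes x0 :: "'a::euclidean_space"
  assumes "0 < s"
  shows "ennreal ((1 - 1 / 2 ^ DIM('a)) * measure lborel (ball (0::'a) 1))
    \<le> (\<integral>\<^sup>+x \<in> ball x0 s - ball x0 (s / 2). ennreal (1 / dist x x0 ^ DIM('a)) \<partial>lebesgue)"
proof -
  define D where "D = DIM('a)"
  define u where "u = measure lborel (ball (0::'a) 1)"
  have "0 < u"
    unfolding u_def by (rule content_ball_pos) simp
  have ball_measure: "emeasure lebesgue (ball x0 t) = ennreal (t ^ D * u)" if "0 \<le> t" for t
    using content_ball_conv_unit_ball[OF that, of x0] emeasure_lborel_ball_finite[of x0 t]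
    by (simp add: emeasure_eq_ennreal_measure u_def D_def)
  have "emeasure lebesgue (ball x0 s - ball x0 (s / 2))
      = emeasure lebesgue (ball x0 s) - emeasure lebesgue (ball x0 (s / 2))"
    using assms emeasure_lborel_ball_finite[of x0 "s / 2"] by (intro emeasure_Diff) auto
  also have "\<dots> = ennreal (s ^ D * u - (s / 2) ^ D * u)"
    using assms \<open>0 < u\<close> by (simp only: ball_measure less_imp_le half_gt_zero) (simp add: ennreal_minus)
  finally have "ennreal ((1 - 1 / 2 ^ D) * u)
      = (\<integral>\<^sup>+x \<in> ball x0 s - ball x0 (s / 2). ennreal (1 / s ^ D) \<partial>lebesgue)"
    using assms \<open>0 < u\<close> by (simp add: nn_integral_cmult_indicator ennreal_mult'[symmetric] field_simps)
  also have "\<dots> \<le> (\<integral>\<^sup>+x \<in> ball x0 s - ball x0 (s / 2). ennreal (1 / dist x x0 ^ D) \<partial>lebesgue)"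
  proof (intro nn_integral_mono)
    fix x
    show "ennreal (1 / s ^ D) * indicator (ball x0 s - ball x0 (s / 2)) x
        \<le> ennreal (1 / dist x x0 ^ D) * indicator (ball x0 s - ball x0 (s / 2)) x"
    proof (cases "x \<in> ball x0 s - ball x0 (s / 2)")
      case True
      then have "0 < dist x x0" "dist x x0 < s"
        using assms by (auto simp: dist_commute)
      then show ?thesis
        using True by (auto intro!: ennreal_leI divide_left_mono power_mono)
    qed simp
  qed
  finally show ?thesis
    by (simp add: D_def u_def)
qed

lemma nn_integral_ball_inverse_dist_power:
  fixes x0 :: "'a::euclidean_space"
  assumes "0 < r"
  shows "(\<integral>\<^sup>+x \<in> ball x0 r. ennreal (1 / dist x x0 ^ DIM('a)) \<partial>lebesgue) = \<infinity>"
proof -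
  define s where "s k = r / 2 ^ k" for k :: nat
  define A where "A k = ball x0 (s k) - ball x0 (s k / 2)" for k
  define c where "c = (1 - 1 / 2 ^ DIM('a)) * measure lborel (ball (0::'a) 1)"
  have s_antimono: "s l \<le> s k" if "k \<le> l" for k l
    unfolding s_def using assms that by (intro divide_left_mono) (auto intro: power_increasing)
  have A_subset: "A k \<subseteq> ball x0 r" for k
    using s_antimono[of 0 k] by (auto simp: A_def s_def[of 0])
  have "disjoint_family A"
  proof -
    have "A k \<inter> A l = {}" if "k < l" for k l
      using s_antimono[of "Suc k" l] that by (auto simp: A_def s_def)
    then show ?thesis
      unfolding disjoint_family_on_def by (metis Int_commute nat_neq_iff)
  qed
  have "0 < c"
    using DIM_positive[where 'a='a] content_ball_pos[of 1 "0::'a"] by (simp add: c_def)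
  then have diverges: "(\<Sum>k. ennreal c) = \<infinity>"
    by (simp add: summable_iff_suminf_neq_top summable_const_iff)
  have "(\<Sum>k. ennreal c) \<le> (\<Sum>k. \<integral>\<^sup>+x \<in> A k. ennreal (1 / dist x x0 ^ DIM('a)) \<partial>lebesgue)"
    using assms unfolding c_def A_def s_def
    by (intro suminf_le nn_integral_shell_inverse_dist_power_ge summableI) simp
  also have "\<dots> = (\<integral>\<^sup>+x \<in> (\<Union>k. A k). ennreal (1 / dist x x0 ^ DIM('a)) \<partial>lebesgue)"
    by (rule nn_integral_disjoint_family[symmetric, OF _ _ \<open>disjoint_family A\<close>])
      (auto simp: A_def intro: measurable_completion)
  also have "\<dots> \<le> (\<integral>\<^sup>+x \<in> ball x0 r. ennreal (1 / dist x x0 ^ DIM('a)) \<partial>lebesgue)"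
    using A_subset by (intro nn_set_integral_set_mono) blast
  finally show ?thesis
    using diverges by (simp add: top_unique)
qed

lemma one_le_dist_mult_mnorm_matrix_inv_minus:
  fixes x y G :: "real^'n^'n"
  assumes "\<not> invertible x" and "invertible y"
  shows "1 \<le> real CARD('n) ^ 6 * mnorm L (matrix_inv y - G) * dist y x
    + real CARD('n) ^ 4 * norm G * dist y x"
proof -
  define \<kappa> where "\<kappa> = real CARD('n) ^ 2"
  have "0 \<le> \<kappa>"
    by (simp add: \<kappa>_def)
  have "mnorm L1 (matrix_inv y - G) \<le> \<kappa> * norm (matrix_inv y - G)"
    unfolding \<kappa>_def by (rule mnorm_le_norm)
  also have "\<dots> \<le> \<kappa> * (\<kappa> * mnorm L (matrix_inv y - G))"
    using \<open>0 \<le> \<kappa>\<close> norm_le_mnorm[of "matrix_inv y - G" L]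
    by (intro mult_left_mono) (simp_all add: \<kappa>_def)
  finally have "mnorm L1 (matrix_inv y) \<le> \<kappa> * (\<kappa> * mnorm L (matrix_inv y - G)) + \<kappa> * norm G"
    using mnorm_triangle[of L1 "matrix_inv y - G" G] mnorm_le_norm[of L1 G] by (simp add: \<kappa>_def)
  moreover have "mnorm L1 (y - x) \<le> \<kappa> * dist y x"
    unfolding \<kappa>_def dist_norm by (rule mnorm_le_norm)
  ultimately have "mnorm L1 (matrix_inv y) * mnorm L1 (y - x)
      \<le> (\<kappa> * (\<kappa> * mnorm L (matrix_inv y - G)) + \<kappa> * norm G) * (\<kappa> * dist y x)"
    by (intro mult_mono mnorm_nonneg)
      (auto simp: \<kappa>_def intro!: add_nonneg_nonneg mult_nonneg_nonneg mnorm_nonneg)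
  moreover have "1 \<le> mnorm L1 (matrix_inv y) * mnorm L1 (y - x)"
    using assms by (rule one_le_mnorm_L1_matrix_inv_mult_diff)
  ultimately show ?thesis
    by (simp add: \<kappa>_def algebra_simps flip: power_add)
qed

lemma mnorm_matrix_inv_minus_ge:
  fixes x0 :: "real^'n^'n" and F :: "real^'n^'n \<Rightarrow> real^'n^'n"
  assumes "\<not> invertible x0" and F_bound: "\<And>y. dist y x0 < 1 \<Longrightarrow> norm (F y) \<le> B"
  obtains c \<delta> where "0 < \<delta>" "\<delta> \<le> c"
    "\<And>y. invertible y \<Longrightarrow> dist y x0 < \<delta> \<Longrightarrow> c / dist y x0 \<le> mnorm L (matrix_inv y - F y)"
proof -
  define \<mu> where "\<mu> = real CARD('n) ^ 6"
  define c where "c = 1 / (2 * \<mu>)"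
  define \<delta> where "\<delta> = c / (\<bar>B\<bar> + 1)"
  have "1 \<le> \<mu>"
    by (simp add: \<mu>_def Suc_le_eq)
  then have "0 < c" "c \<le> 1"
    by (simp_all add: c_def)
  then have "0 < \<delta>" "\<delta> \<le> c"
    by (simp_all add: \<delta>_def field_simps)
  moreover have "c / dist y x0 \<le> mnorm L (matrix_inv y - F y)"
    if "invertible y" and "dist y x0 < \<delta>" for y
  proof -
    define d where "d = dist y x0"
    have "0 < d"
      using assms(1) that(1) by (auto simp: d_def)
    have "real CARD('n) ^ 4 * norm (F y) * d \<le> \<mu> * (\<bar>B\<bar> + 1) * d"
      using \<open>0 < d\<close> F_bound[of y] that(2) \<open>\<delta> \<le> c\<close> \<open>c \<le> 1\<close>
      by (intro mult_right_mono mult_mono) (simp_all add: \<mu>_def d_def power_increasing)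
    also have "\<dots> \<le> \<mu> * (\<bar>B\<bar> + 1) * \<delta>"
      using that(2) \<open>1 \<le> \<mu>\<close> by (intro mult_left_mono) (simp_all add: d_def)
    also have "\<dots> = 1 / 2"
      using \<open>1 \<le> \<mu>\<close> by (simp add: \<delta>_def c_def)
    finally have "1 \<le> 2 * \<mu> * mnorm L (matrix_inv y - F y) * d"
      using one_le_dist_mult_mnorm_matrix_inv_minus[OF assms(1) that(1), of L "F y"]
      by (simp add: \<mu>_def d_def)
    then show ?thesis
      using \<open>0 < d\<close> \<open>1 \<le> \<mu>\<close> by (simp add: c_def d_def field_simps)
  qed
  ultimately show ?thesis
    using that by blast
qed

lemma powr_ratio_lower_bound:
  fixes a b c d R K K' :: real
  assumes "0 < d" "d \<le> c" "c / d \<le> a" "0 < b" "b \<le> R" "real n \<le> K" "0 \<le> K'"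
  shows "c ^ n / R powr K' / d ^ n \<le> a powr K / b powr K'"
proof -
  have "1 \<le> c / d"
    using assms by simp
  have "c ^ n / d ^ n = (c / d) powr real n"
    using assms by (simp add: powr_realpow power_divide)
  also have "\<dots> \<le> (c / d) powr K"
    using \<open>1 \<le> c / d\<close> assms(6) by (rule powr_mono[rotated])
  also have "\<dots> \<le> a powr K"
    using assms \<open>1 \<le> c / d\<close> by (intro powr_mono2) auto
  finally have "c ^ n / d ^ n \<le> a powr K" .
  moreover have "b powr K' \<le> R powr K'"
    using assms by (intro powr_mono2) auto
  ultimately have "c ^ n / d ^ n / R powr K' \<le> a powr K / b powr K'"
    using assms by (intro frac_le) auto
  then show ?thesis
    by (simp add: divide_divide_eq_left mult.commute)
qed

lemma matrix_inv_error_ratio_ge_power_singularity: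
  fixes x0 :: "real^'n^'n" and F :: "real^'n^'n \<Rightarrow> real^'n^'n"
  assumes "\<not> invertible x0" and "\<And>y. dist y x0 < 1 \<Longrightarrow> norm (F y) \<le> B"
    and "real (CARD('n) ^ 2) \<le> K" and "0 \<le> K'"
  obtains C \<delta> where "0 < C" "0 < \<delta>"
    "\<And>y. invertible y \<Longrightarrow> dist y x0 < \<delta> \<Longrightarrow>
       C / dist y x0 ^ DIM(real^'n^'n) \<le> mnorm L (matrix_inv y - F y) powr K / mnorm L y powr K'"
proof -
  obtain c \<delta> where "0 < \<delta>" "\<delta> \<le> c" and inv_large:
    "\<And>y. invertible y \<Longrightarrow> dist y x0 < \<delta> \<Longrightarrow> c / dist y x0 \<le> mnorm L (matrix_inv y - F y)"
    using mnorm_matrix_inv_minus_ge[of x0 F B L, OF assms(1,2)] by blast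
  define R where "R = real CARD('n) ^ 2 * (norm x0 + 1)"
  have "0 < R"
    unfolding R_def by (intro mult_pos_pos add_nonneg_pos) simp_all
  show ?thesis
  proof (rule that[of "c ^ DIM(real^'n^'n) / R powr K'" "min \<delta> 1"])
    show "0 < c ^ DIM(real^'n^'n) / R powr K'"
      using \<open>0 < R\<close> \<open>0 < \<delta>\<close> \<open>\<delta> \<le> c\<close> by simp
    show "0 < min \<delta> 1"
      using \<open>0 < \<delta>\<close> by simp
  next
    fix y :: "real^'n^'n"
    assume "invertible y" and "dist y x0 < min \<delta> 1"
    have "y \<noteq> 0" and "y \<noteq> x0"
      using \<open>invertible y\<close> assms(1) by (auto simp: invertible_det_nz det_0[unfolded mat_0])
    have "mnorm L y \<le> real CARD('n) ^ 2 * norm y"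
      by (rule mnorm_le_norm)
    also have "\<dots> \<le> R"
      using \<open>dist y x0 < min \<delta> 1\<close> norm_triangle_sub[of y x0]
      by (auto simp: R_def dist_norm intro!: mult_left_mono)
    finally have "mnorm L y \<le> R" .
    then show "c ^ DIM(real^'n^'n) / R powr K' / dist y x0 ^ DIM(real^'n^'n)
        \<le> mnorm L (matrix_inv y - F y) powr K / mnorm L y powr K'"
      using \<open>y \<noteq> x0\<close> \<open>\<delta> \<le> c\<close> \<open>dist y x0 < min \<delta> 1\<close> inv_large[OF \<open>invertible y\<close>]
        mnorm_pos[OF \<open>y \<noteq> 0\<close>] assms(3,4)
      by (intro powr_ratio_lower_bound) (auto simp: power2_eq_square)
  qed
qed

lemma nn_integral_infinite_at_power_singularity:
  fixes x0 :: "'a::euclidean_space" and f :: "'a \<Rightarrow> real"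
  assumes "S \<in> null_sets lebesgue" and "0 < \<delta>" and "ball x0 \<delta> \<subseteq> M" and "0 < C"
    and "\<And>x. x \<in> ball x0 \<delta> \<Longrightarrow> x \<notin> S \<Longrightarrow> C / dist x x0 ^ DIM('a) \<le> f x"
  shows "(\<integral>\<^sup>+x \<in> M - S. ennreal (f x) \<partial>lebesgue) = \<infinity>"
proof -
  have meas: "(\<lambda>x. ennreal (1 / dist x x0 ^ DIM('a)) * indicator (ball x0 \<delta>) x)
      \<in> borel_measurable lebesgue"
  proof (rule measurable_completion)
    have [measurable]: "ball x0 \<delta> \<in> sets borel"
      by simp
    show "(\<lambda>x. ennreal (1 / dist x x0 ^ DIM('a)) * indicator (ball x0 \<delta>) x)
        \<in> borel_measurable lborel"
      by measurable
  qed
  have "\<infinity> = ennreal C * (\<integral>\<^sup>+x \<in> ball x0 \<delta>. ennreal (1 / dist x x0 ^ DIM('a)) \<partial>lebesgue)"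
    using nn_integral_ball_inverse_dist_power[OF assms(2), of x0] assms(4) by (simp add: ennreal_mult_top)
  also have "\<dots> = (\<integral>\<^sup>+x \<in> ball x0 \<delta>. ennreal C * ennreal (1 / dist x x0 ^ DIM('a)) \<partial>lebesgue)"
    using nn_integral_cmult[OF meas, of "ennreal C"] by (simp add: mult.assoc)
  also have "\<dots> = (\<integral>\<^sup>+x \<in> ball x0 \<delta>. ennreal (C / dist x x0 ^ DIM('a)) \<partial>lebesgue)"
    using assms(4) by (simp add: ennreal_mult'[symmetric])
  also have "\<dots> \<le> (\<integral>\<^sup>+x \<in> M - S. ennreal (f x) \<partial>lebesgue)"
  proof (rule nn_integral_mono_AE)
    show "AE x in lebesgue. ennreal (C / dist x x0 ^ DIM('a)) * indicator (ball x0 \<delta>) x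
        \<le> ennreal (f x) * indicator (M - S) x"
      using AE_not_in[OF assms(1)]
    proof eventually_elim
      case (elim x)
      show ?case
      proof (cases "x \<in> ball x0 \<delta>")
        case True
        with elim assms(3) have "x \<in> M - S"
          by auto
        with True elim show ?thesis
          using assms(5)[of x] by (simp add: ennreal_leI)
      qed simp
    qed
  qed
  finally show ?thesis
    by (simp add: top_unique)
qed

theorem theoremA1:
  fixes L Lp Ls :: normL
    and M :: "(real^'n^'n) set"
    and F :: "real^'n^'n \<Rightarrow> real^'n^'n"
    and K K' :: real
  assumes M_meas: "M \<in> sets lebesgue"
    and M_fin: "emeasure lebesgue M < \<infinity>"
    and M_pos: "emeasure lebesgue M > 0"
    and M_ball: "\<exists>a c. c > 0 \<and> {x. mnorm L (x - a) < c} \<subseteq> M \<and>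
                   (\<exists>x. mnorm L (x - a) < c \<and> rank x = CARD('n) - 1)"
    and F_lip: "poly_lipschitz Lp Ls F"
    and K_ge: "K \<ge> real (CARD('n) ^ 2)"
    and K'_ge: "K' \<ge> 0"
  shows "ennreal (1 / measure lebesgue M) *
           (\<integral>\<^sup>+ x \<in> (M - {x\<in>M. \<not> invertible x}).
              ennreal (mnorm L (matrix_inv x - F x) powr K / mnorm L x powr K') \<partial>lebesgue)
         = \<infinity>"
proof -
  obtain a c x0 where L_ball: "{x. mnorm L (x - a) < c} \<subseteq> M"
    and "mnorm L (x0 - a) < c" and "rank x0 = CARD('n) - 1"
    using M_ball by blast
  then have "rank x0 < CARD('n)"
    using zero_less_card_finite[where 'a='n] by linarith
  then have "\<not> invertible x0"
    by (simp add: invertible_det_nz det_eq_0_rank)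
  obtain r where "0 < r" and "ball x0 r \<subseteq> {x. mnorm L (x - a) < c}"
    using ball_subset_mnorm_ball[OF \<open>mnorm L (x0 - a) < c\<close>] .
  with L_ball have "ball x0 r \<subseteq> M"
    by blast
  obtain B where "\<forall>z \<in> F ` ball x0 1. norm z \<le> B"
    using poly_lipschitz_bounded_image[OF F_lip bounded_ball] unfolding bounded_iff by blast
  then have F_bound: "norm (F y) \<le> B" if "dist y x0 < 1" for y
    using that by (simp add: dist_commute)
  obtain C \<delta> where "0 < C" "0 < \<delta>" and ratio_large:
    "\<And>y. invertible y \<Longrightarrow> dist y x0 < \<delta> \<Longrightarrow>
       C / dist y x0 ^ DIM(real^'n^'n) \<le> mnorm L (matrix_inv y - F y) powr K / mnorm L y powr K'"
    using matrix_inv_error_ratio_ge_power_singularity[of x0 F B K K' L,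
        OF \<open>\<not> invertible x0\<close> F_bound K_ge K'_ge]
    by blast
  have "{x \<in> M. \<not> invertible x} \<in> null_sets lebesgue"
    using negligible_subset[OF negligible_singular_matrices, of "{x \<in> M. \<not> invertible x}"]
    by (auto simp: negligible_iff_null_sets)
  then have "(\<integral>\<^sup>+ x \<in> (M - {x\<in>M. \<not> invertible x}).
      ennreal (mnorm L (matrix_inv x - F x) powr K / mnorm L x powr K') \<partial>lebesgue) = \<infinity>"
    using \<open>0 < r\<close> \<open>0 < \<delta>\<close> \<open>ball x0 r \<subseteq> M\<close> \<open>0 < C\<close>
    by (intro nn_integral_infinite_at_power_singularity[where \<delta> = "min r \<delta>" and C = C])
      (auto simp: dist_commute subset_iff simp del: DIM_cart intro!: ratio_large)
  moreover have "0 < measure lebesgue M"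
    using M_fin M_pos by (simp add: emeasure_eq_ennreal_measure)
  ultimately show ?thesis
    by (simp add: ennreal_mult_top)
qed
end
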